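(* Let $N$ be a phylogenetic network on $X\subseteq[n]$ and let $i,j\in[n]$, $i\neq j$. Then $(i,j)$ is a cherry of $N$ if and only if $(i,j)$ is a cherry of the multiset $\boldsymbol\mu(N)$.
   Context: A (binary) phylogenetic network on a finite set $X\subseteq[n]=\{1,\dots,n\}$ is a directed acyclic graph $N=(V,A)$ without parallel arcs in which every node is exactly one of: the root (indegree 0, outdegree 1; there is exactly one), a leaf (indegree 1, outdegree 0), a tree node (indegree 1, outdegree 2), or a reticulation (indegree 2, outdegree 1); the leaves are identified with the elements of $X$. $V_T(N)$ denotes the set of leaves and tree nodes, $V_H(N)$ the set of reticulations. Paths are directed and trivial paths of length 0 are allowed; $m(u,v)$ denotes the number of directed paths from $u$ to $v$. Extended $\mu$-vectors: for $u\in V$ and $i\in[n]$, $\mu_i(u)=m(u,i)$ (which is $0$ if $i\notin X$), and $\mu_0(u)=\sum_{h\in V_H(N)} m(u,h)$; $\mu(u)=(\mu_0(u),\dots,\mu_n(u))$. The (extended) $\mu$-representation $\boldsymbol\mu(N)$ is the multiset $\{\mu(u)\mid u\in V_T(N)\}$, each vector counted with the number of nodes of $V_T(N)$ having it. For $S\subseteq\{0,\dots,n\}$, $\delta_S$ is the 0/1 indicator vector of $S$ indexed by $0,\dots,n$, and $\delta_{j_1,\dots,j_k}=\delta_{\{j_1,\dots,j_k\}}$. In a network, for distinct leaves $i,j$ with parents $p_i,p_j$, $(i,j)$ is a cherry of $N$ if $p_i=p_j$. For a finite multiset $\boldsymbol\mu$ of vectors of nonnegative integers indexed by $0,\dots,n$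 and distinct $i,j\in[n]$, $(i,j)$ is a cherry of $\boldsymbol\mu$ if $\delta_{i,j}$ belongs to $\boldsymbol\mu$ with multiplicity exactly $1$, and every element $\mu=(\mu_0,\dots,\mu_n)$ of $\boldsymbol\mu$ other than $\delta_i$ and $\delta_j$ satisfies $\mu_i=\mu_j$. *)

theory Defs
  imports Main "HOL-Library.Multiset"
begin

text \<open>Phylogenetic networks: a finite node set V of arbitrary type, an arc set A
(a set of pairs, so there are no parallel arcs), and a labelling lab of the leaves
by elements of X.\<close>

definition indeg :: "('v \<times> 'v) set \<Rightarrow> 'v \<Rightarrow> nat" where
  "indeg A v = card {u. (u, v) \<in> A}"

definition outdeg :: "('v \<times> 'v) set \<Rightarrow> 'v \<Rightarrow> nat" where
  "outdeg A v = card {w. (v, w) \<in> A}"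

definition leaves :: "'v set \<Rightarrow> ('v \<times> 'v) set \<Rightarrow> 'v set" where
  "leaves V A = {v \<in> V. indeg A v = 1 \<and> outdeg A v = 0}"

definition tree_nodes :: "'v set \<Rightarrow> ('v \<times> 'v) set \<Rightarrow> 'v set" where
  "tree_nodes V A = {v \<in> V. indeg A v = 1 \<and> outdeg A v = 2}"

definition reticulations :: "'v set \<Rightarrow> ('v \<times> 'v) set \<Rightarrow> 'v set" where
  "reticulations V A = {v \<in> V. indeg A v = 2 \<and> outdeg A v = 1}"

definition roots :: "'v set \<Rightarrow> ('v \<times> 'v) set \<Rightarrow> 'v set" where
  "roots V A = {v \<in> V. indeg A v = 0 \<and> outdeg A v = 1}"

definition VT :: "'v set \<Rightarrow> ('v \<times> 'v) set \<Rightarrow> 'v set" where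
  "VT V A = leaves V A \<union> tree_nodes V A"

definition phylo_net ::
  "'v set \<Rightarrow> ('v \<times> 'v) set \<Rightarrow> ('v \<Rightarrow> nat) \<Rightarrow> nat set \<Rightarrow> nat \<Rightarrow> bool" where
  "phylo_net V A lab X n \<longleftrightarrow>
     finite V \<and> A \<subseteq> V \<times> V \<and> acyclic A \<and>
     card (roots V A) = 1 \<and>
     (\<forall>v \<in> V. v \<in> roots V A \<or> v \<in> leaves V A \<or> v \<in> tree_nodes V A
                \<or> v \<in> reticulations V A) \<and>
     inj_on lab (leaves V A) \<and> lab ` leaves V A = X \<and> X \<subseteq> {1..n}"

text \<open>Directed paths from u to v (as vertex sequences; trivial path allowed).\<close>
definition dpaths :: "('v \<times> 'v) set \<Rightarrow> 'v \<Rightarrow> 'v \<Rightarrow> 'v list set" where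
  "dpaths A u v = {p. p \<noteq> [] \<and> hd p = u \<and> last p = v \<and>
                      (\<forall>k. Suc k < length p \<longrightarrow> (p ! k, p ! Suc k) \<in> A)}"

definition npaths :: "('v \<times> 'v) set \<Rightarrow> 'v \<Rightarrow> 'v \<Rightarrow> nat" where
  "npaths A u v = card (dpaths A u v)"

definition leaf_of :: "'v set \<Rightarrow> ('v \<times> 'v) set \<Rightarrow> ('v \<Rightarrow> nat) \<Rightarrow> nat \<Rightarrow> 'v" where
  "leaf_of V A lab i = (THE v. v \<in> leaves V A \<and> lab v = i)"

text \<open>Extended mu-vector of u, as a list of length n+1 indexed by 0..n.\<close>
definition mu_vec ::
  "'v set \<Rightarrow> ('v \<times> 'v) set \<Rightarrow> ('v \<Rightarrow> nat) \<Rightarrow> nat set \<Rightarrow> nat \<Rightarrow> 'v \<Rightarrow> nat list" where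
  "mu_vec V A lab X n u =
     map (\<lambda>k. if k = 0 then (\<Sum>h \<in> reticulations V A. npaths A u h)
               else if k \<in> X then npaths A u (leaf_of V A lab k) else 0) [0..<Suc n]"

definition mu_rep ::
  "'v set \<Rightarrow> ('v \<times> 'v) set \<Rightarrow> ('v \<Rightarrow> nat) \<Rightarrow> nat set \<Rightarrow> nat \<Rightarrow> nat list multiset" where
  "mu_rep V A lab X n = image_mset (mu_vec V A lab X n) (mset_set (VT V A))"

definition delta :: "nat \<Rightarrow> nat set \<Rightarrow> nat list" where
  "delta n S = map (\<lambda>k. if k \<in> S then 1 else 0) [0..<Suc n]"

definition net_cherry ::
  "'v set \<Rightarrow> ('v \<times> 'v) set \<Rightarrow> ('v \<Rightarrow> nat) \<Rightarrow> nat set \<Rightarrow> nat \<Rightarrow> nat \<Rightarrow> bool" where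
  "net_cherry V A lab X i j \<longleftrightarrow> i \<in> X \<and> j \<in> X \<and> i \<noteq> j \<and>
     (\<exists>p. (p, leaf_of V A lab i) \<in> A \<and> (p, leaf_of V A lab j) \<in> A)"

definition mset_cherry :: "nat \<Rightarrow> nat list multiset \<Rightarrow> nat \<Rightarrow> nat \<Rightarrow> bool" where
  "mset_cherry n M i j \<longleftrightarrow> i \<noteq> j \<and> count M (delta n {i, j}) = 1 \<and>
     (\<forall>m \<in># M. m \<noteq> delta n {i} \<and> m \<noteq> delta n {j} \<longrightarrow> m ! i = m ! j)"

end

theory Submission
  imports Defs
begin

text \<open>A vector \<open>\<delta>\<^sub>i\<^sub>,\<^sub>j\<close> says that no reticulation lies below the node and that
it has exactly one path to each of the leaves \<open>i\<close>, \<open>j\<close> and none to any other leaf.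
For a tree node this forces both children to be leaves (a tree node among the children
would yield a third path to a leaf), so \<open>\<mu>(u) = \<delta>\<^sub>i\<^sub>,\<^sub>j\<close> holds exactly for the
common parent of \<open>i\<close> and \<open>j\<close>. Leaves have vectors \<open>\<delta>\<^sub>i\<close>, and every other node
reaches \<open>i\<close> and \<open>j\<close> only through that parent \<open>p\<close>, so \<open>\<mu>\<^sub>i(u) = m(u,p) = \<mu>\<^sub>j(u)\<close>.\<close>

lemma singleton_in_dpaths: "[u] \<in> dpaths A u u"
  by (simp add: dpaths_def)

lemma hd_dpaths: "p \<in> dpaths A u v \<Longrightarrow> hd p = u"
  by (simp add: dpaths_def)

lemma Cons_in_dpaths:
  assumes "(u, w) \<in> A" "q \<in> dpaths A w v"
  shows "u # q \<in> dpaths A u v"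
  using assms unfolding dpaths_def
  by (auto simp: hd_conv_nth nth_Cons split: nat.split)

lemma dpathsE_Cons:
  assumes "p \<in> dpaths A u v" "u \<noteq> v"
  obtains w q where "p = u # q" "(u, w) \<in> A" "q \<in> dpaths A w v"
proof -
  obtain q where p: "p = u # q"
    using assms(1) unfolding dpaths_def by (cases p) auto
  have q: "q \<noteq> []" "last q = v" "\<And>k. Suc k < length q \<Longrightarrow> (q ! k, q ! Suc k) \<in> A"
    using assms unfolding p dpaths_def by (auto split: if_splits)
  have "(u, hd q) \<in> A"
    using assms(1) q(1) unfolding p dpaths_def by (auto simp: hd_conv_nth)
  moreover have "q \<in> dpaths A (hd q) v"
    using q unfolding dpaths_def by simp
  ultimately show thesis using p that by blast
qed

lemma snoc_in_dpaths:
  assumes "q \<in> dpaths A u w" "(w, x) \<in> A"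
  shows "q @ [x] \<in> dpaths A u x"
  using assms unfolding dpaths_def
  apply (auto simp: nth_append last_conv_nth less_Suc_eq)
  subgoal for k by (subgoal_tac "k = length q - Suc 0") auto
  done

lemma dpathsE_snoc:
  assumes "p \<in> dpaths A u v" "u \<noteq> v"
  obtains w q where "p = q @ [v]" "(w, v) \<in> A" "q \<in> dpaths A u w"
proof -
  define q where "q = butlast p"
  have p: "p = q @ [v]"
    using assms(1) unfolding q_def dpaths_def by auto
  have q: "q \<noteq> []" "hd q = u"
    using assms unfolding p dpaths_def by (cases q; auto)+
  have arcs: "(p ! k, p ! Suc k) \<in> A" if "Suc k < length p" for k
    using assms(1) that unfolding dpaths_def by blast
  have "(last q, v) \<in> A"
    using arcs[of "length q - 1"] q(1) unfolding p by (auto simp: nth_append last_conv_nth)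
  moreover have "(q ! k, q ! Suc k) \<in> A" if "Suc k < length q" for k
    using arcs[of k] that unfolding p by (simp add: nth_append)
  then have "q \<in> dpaths A u (last q)"
    using q unfolding dpaths_def by simp
  ultimately show thesis using p that by blast
qed

lemma dpaths_from_sink:
  assumes "\<And>w. (u, w) \<notin> A"
  shows "dpaths A u v = (if v = u then {[u]} else {})"
proof -
  have "p \<in> dpaths A u v \<longleftrightarrow> p = [u] \<and> v = u" for p
  proof
    assume p: "p \<in> dpaths A u v"
    obtain q where q: "p = u # q" using p unfolding dpaths_def by (cases p) auto
    have "q = []"
      using p assms unfolding q dpaths_def by (cases q) (auto dest: spec[of _ 0])
    then show "p = [u] \<and> v = u" using p unfolding q dpaths_def by simp
  qed (simp add: singleton_in_dpaths)
  then show ?thesis by (cases "v = u") auto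
qed

lemma dpaths_nth_trancl:
  assumes "p \<in> dpaths A u v" "a < b" "b < length p"
  shows "(p ! a, p ! b) \<in> A\<^sup>+"
  using assms(2,3)
proof (induction b)
  case (Suc b)
  have "(p ! b, p ! Suc b) \<in> A"
    using assms(1) Suc.prems unfolding dpaths_def by auto
  then show ?case
    using Suc by (cases "a = b") (auto intro: trancl_into_trancl)
qed simp

lemma distinct_dpaths:
  assumes "acyclic A" "p \<in> dpaths A u v"
  shows "distinct p"
  unfolding distinct_conv_nth
proof (intro allI impI)
  fix a b assume "a < length p" "b < length p" "a \<noteq> b"
  then show "p ! a \<noteq> p ! b"
    using dpaths_nth_trancl[OF assms(2), of a b] dpaths_nth_trancl[OF assms(2), of b a] assms(1)
    unfolding acyclic_def by (metis linorder_neqE_nat)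
qed

lemma set_dpaths_subset:
  assumes "A \<subseteq> V \<times> V" "u \<in> V" "p \<in> dpaths A u v"
  shows "set p \<subseteq> V"
proof -
  have "p ! k \<in> V" if "k < length p" for k
    using that
  proof (induction k)
    case 0
    then show ?case using assms(2,3) unfolding dpaths_def by (auto simp: hd_conv_nth)
  next
    case (Suc k)
    then have "(p ! k, p ! Suc k) \<in> A" using assms(3) unfolding dpaths_def by auto
    then show ?case using assms(1) by auto
  qed
  then show ?thesis by (auto simp: in_set_conv_nth)
qed

lemma finite_dpaths:
  assumes "finite V" "A \<subseteq> V \<times> V" "acyclic A" "u \<in> V"
  shows "finite (dpaths A u v)"
proof (rule finite_subset[OF _ finite_lists_length_le[OF assms(1)]])
  show "dpaths A u v \<subseteq> {xs. set xs \<subseteq> V \<and> length xs \<le> card V}"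
  proof
    fix p assume p: "p \<in> dpaths A u v"
    have "set p \<subseteq> V" using set_dpaths_subset[OF assms(2,4) p] .
    moreover have "length p = card (set p)"
      using distinct_dpaths[OF assms(3) p] by (simp add: distinct_card)
    ultimately show "p \<in> {xs. set xs \<subseteq> V \<and> length xs \<le> card V}"
      using card_mono[OF assms(1)] by auto
  qed
qed

lemma nth_delta: "k \<le> n \<Longrightarrow> delta n S ! k = (if k \<in> S then 1 else 0)"
  by (simp add: delta_def del: upt_Suc)

locale phylo_network =
  fixes V :: "'v set" and A :: "('v \<times> 'v) set" and lab :: "'v \<Rightarrow> nat"
    and X :: "nat set" and n :: nat
  assumes phylo_net: "phylo_net V A lab X n"
begin

lemma finite_V: "finite V"
  and arcs_subset: "A \<subseteq> V \<times> V"
  and acyclic_arcs: "acyclic A"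
  and X_subset: "X \<subseteq> {1..n}"
  and inj_on_lab: "inj_on lab (leaves V A)"
  and lab_leaves: "lab ` leaves V A = X"
  using phylo_net unfolding phylo_net_def by auto

lemma node_cases:
  "v \<in> V \<Longrightarrow> v \<in> roots V A \<or> v \<in> leaves V A \<or> v \<in> tree_nodes V A \<or> v \<in> reticulations V A"
  using phylo_net unfolding phylo_net_def by blast

lemma finite_children: "finite {w. (u, w) \<in> A}"
  by (rule finite_subset[OF _ finite_V]) (use arcs_subset in blast)

lemma finite_parents: "finite {w. (w, u) \<in> A}"
  by (rule finite_subset[OF _ finite_V]) (use arcs_subset in blast)

lemma finite_VT: "finite (VT V A)"
  using finite_V unfolding VT_def leaves_def tree_nodes_def by simp

lemma leaf_no_child: "l \<in> leaves V A \<Longrightarrow> (l, w) \<notin> A"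
  using finite_children[of l] unfolding leaves_def outdeg_def by auto

lemma dpaths_from_leaf: "l \<in> leaves V A \<Longrightarrow> dpaths A l v = (if v = l then {[l]} else {})"
  by (rule dpaths_from_sink[OF leaf_no_child])

lemma leaf_parent_unique:
  assumes "l \<in> leaves V A" "(a, l) \<in> A" "(b, l) \<in> A"
  shows "a = b"
proof -
  have "card {w. (w, l) \<in> A} = 1" using assms(1) unfolding leaves_def indeg_def by auto
  then obtain x where "{w. (w, l) \<in> A} = {x}" by (rule card_1_singletonE)
  then show ?thesis using assms(2,3) by (metis mem_Collect_eq singletonD)
qed

lemma tree_node_children:
  assumes "u \<in> tree_nodes V A"
  obtains c1 c2 where "c1 \<noteq> c2" "{w. (u, w) \<in> A} = {c1, c2}"
  using assms unfolding tree_nodes_def outdeg_def card_2_iff by blast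

lemma tree_node_if_two_children:
  assumes "(p, a) \<in> A" "(p, b) \<in> A" "a \<noteq> b"
  shows "p \<in> tree_nodes V A" "{w. (p, w) \<in> A} = {a, b}"
proof -
  have sub: "{a, b} \<subseteq> {w. (p, w) \<in> A}" using assms(1,2) by simp
  then have "outdeg A p \<ge> 2"
    unfolding outdeg_def using card_mono[OF finite_children sub] assms(3) by simp
  moreover have "p \<in> V" using assms(1) arcs_subset by blast
  ultimately show p: "p \<in> tree_nodes V A"
    using node_cases unfolding roots_def leaves_def reticulations_def by fastforce
  then have "card {a, b} = card {w. (p, w) \<in> A}"
    using assms(3) unfolding tree_nodes_def outdeg_def by simp
  then show "{w. (p, w) \<in> A} = {a, b}"
    using card_subset_eq[OF finite_children sub] by simp
qed

lemma child_leaf_or_tree_node: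
  assumes "(u, c) \<in> A" "c \<notin> reticulations V A"
  shows "c \<in> leaves V A \<or> c \<in> tree_nodes V A"
proof -
  have "indeg A c \<noteq> 0"
    using assms(1) finite_parents[of c] unfolding indeg_def by auto
  moreover have "c \<in> V" using assms(1) arcs_subset by blast
  ultimately show ?thesis
    using assms(2) node_cases[of c] unfolding roots_def by auto
qed

lemma in_X_range: "k \<in> X \<Longrightarrow> k \<in> {1..n}"
  using X_subset by blast

lemma lab_in_X: "l \<in> leaves V A \<Longrightarrow> lab l \<in> X"
  using lab_leaves by blast

lemma leaf_of_in_leaves: "k \<in> X \<Longrightarrow> leaf_of V A lab k \<in> leaves V A"
  and lab_leaf_of: "k \<in> X \<Longrightarrow> lab (leaf_of V A lab k) = k"
proof -
  assume "k \<in> X"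
  then obtain l where l: "l \<in> leaves V A" "lab l = k" using lab_leaves by blast
  have "leaf_of V A lab k = l"
    unfolding leaf_of_def
  proof (rule the_equality)
    show "\<And>m. m \<in> leaves V A \<and> lab m = k \<Longrightarrow> m = l"
      using l inj_onD[OF inj_on_lab] by metis
  qed (use l in simp)
  then show "leaf_of V A lab k \<in> leaves V A" "lab (leaf_of V A lab k) = k" using l by simp_all
qed

lemma leaf_of_lab:
  assumes "l \<in> leaves V A"
  shows "leaf_of V A lab (lab l) = l"
  using inj_onD[OF inj_on_lab lab_leaf_of leaf_of_in_leaves assms] lab_in_X[OF assms] by simp

lemma npaths_pos: "u \<in> V \<Longrightarrow> p \<in> dpaths A u v \<Longrightarrow> npaths A u v > 0"
  unfolding npaths_def using finite_dpaths[OF finite_V arcs_subset acyclic_arcs]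
  by (auto simp: card_gt_0_iff)

lemma dpaths_to_leaf:
  assumes "v \<in> V"
  obtains l q where "l \<in> leaves V A" "q \<in> dpaths A v l"
proof -
  have "wf (A\<inverse>)"
    using finite_acyclic_wf_converse[OF _ acyclic_arcs] finite_V arcs_subset
    by (meson finite_SigmaI finite_subset)
  then have "v \<in> V \<longrightarrow> (\<exists>l \<in> leaves V A. \<exists>q. q \<in> dpaths A v l)"
  proof (induction v)
    case (less x)
    show ?case
    proof (cases "\<exists>w. (x, w) \<in> A")
      case True
      then obtain w where "(x, w) \<in> A" by blast
      then show ?thesis using less arcs_subset by (blast intro: Cons_in_dpaths)
    next
      case False
      then have "x \<in> V \<longrightarrow> x \<in> leaves V A"
        using node_cases[of x] unfolding roots_def tree_nodes_def reticulations_def outdeg_def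
        by auto
      then show ?thesis using singleton_in_dpaths[of x A] by blast
    qed
  qed
  then show thesis using assms that by blast
qed

lemma nth_mu_vec:
  "k \<le> n \<Longrightarrow> mu_vec V A lab X n u ! k =
     (if k = 0 then (\<Sum>h \<in> reticulations V A. npaths A u h)
      else if k \<in> X then npaths A u (leaf_of V A lab k) else 0)"
  by (simp add: mu_vec_def del: upt_Suc)

lemma nth_mu_vec_label: "k \<in> X \<Longrightarrow> mu_vec V A lab X n u ! k = npaths A u (leaf_of V A lab k)"
  using nth_mu_vec[of k u] in_X_range[of k] by simp

lemma mu_vec_eq_delta_iff:
  "mu_vec V A lab X n u = delta n S \<longleftrightarrow>
     (\<forall>k\<le>n. mu_vec V A lab X n u ! k = (if k \<in> S then 1 else 0))"
  by (auto simp: list_eq_iff_nth_eq mu_vec_def delta_def nth_delta simp del: upt_Suc)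

lemma in_mu_rep_iff: "m \<in># mu_rep V A lab X n \<longleftrightarrow> (\<exists>u \<in> VT V A. mu_vec V A lab X n u = m)"
  unfolding mu_rep_def in_image_mset finite_set_mset_mset_set[OF finite_VT] by blast

lemma mu_vec_leaf:
  assumes l: "l \<in> leaves V A"
  shows "mu_vec V A lab X n l = delta n {lab l}"
  unfolding mu_vec_eq_delta_iff
proof (intro allI impI)
  fix k assume k: "k \<le> n"
  have "(\<Sum>h \<in> reticulations V A. npaths A l h) = 0"
    using l by (intro sum.neutral)
      (auto simp: npaths_def dpaths_from_leaf reticulations_def leaves_def)
  moreover have labX: "lab l \<in> X" by (rule lab_in_X[OF l])
  moreover have "lab l \<noteq> 0" using in_X_range[OF labX] by simp
  moreover have "npaths A l (leaf_of V A lab k) = (if k = lab l then 1 else 0)" if "k \<in> X"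
    using lab_leaf_of[OF that] leaf_of_lab[OF l]
    unfolding npaths_def dpaths_from_leaf[OF l] by auto
  ultimately show "mu_vec V A lab X n l ! k = (if k \<in> {lab l} then 1 else 0)"
    unfolding nth_mu_vec[OF k] by (cases "k = 0"; cases "k \<in> X") auto
qed

lemma npaths_via_leaf_parent:
  assumes l: "l \<in> leaves V A" and pl: "(p, l) \<in> A" and "u \<noteq> l"
  shows "npaths A u l = npaths A u p"
proof -
  have "dpaths A u l = (\<lambda>q. q @ [l]) ` dpaths A u p"
  proof (intro equalityI subsetI)
    fix r assume "r \<in> dpaths A u l"
    then obtain w q where "r = q @ [l]" "(w, l) \<in> A" "q \<in> dpaths A u w"
      using \<open>u \<noteq> l\<close> by (rule dpathsE_snoc)
    then show "r \<in> (\<lambda>q. q @ [l]) ` dpaths A u p"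
      using leaf_parent_unique[OF l _ pl] by blast
  next
    fix r assume "r \<in> (\<lambda>q. q @ [l]) ` dpaths A u p"
    then show "r \<in> dpaths A u l" using snoc_in_dpaths[OF _ pl] by blast
  qed
  moreover have "inj_on (\<lambda>q. q @ [l]) (dpaths A u p)" by (rule inj_onI) simp
  ultimately show ?thesis unfolding npaths_def by (simp add: card_image)
qed

text \<open>Three pairwise distinct paths from \<open>u\<close> to leaves arise as soon as a child of
  \<open>u\<close> is a tree node.\<close>
lemma child_is_leaf_if_two_leaf_paths:
  assumes u: "u \<in> tree_nodes V A"
    and no_ret: "\<And>h. h \<in> reticulations V A \<Longrightarrow> dpaths A u h = {}"
    and two: "\<And>l q. l \<in> leaves V A \<Longrightarrow> q \<in> dpaths A u l \<Longrightarrow> q \<in> {p1, p2}"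
    and c: "(u, c) \<in> A"
  shows "c \<in> leaves V A"
proof (rule ccontr)
  assume "c \<notin> leaves V A"
  moreover have "c \<notin> reticulations V A"
    using no_ret Cons_in_dpaths[OF c singleton_in_dpaths] by blast
  ultimately have "c \<in> tree_nodes V A" using child_leaf_or_tree_node[OF c] by blast
  then obtain d1 d2 where "d1 \<noteq> d2" "{w. (c, w) \<in> A} = {d1, d2}"
    by (rule tree_node_children)
  then have d: "d1 \<noteq> d2" "(c, d1) \<in> A" "(c, d2) \<in> A" by auto
  obtain c' where c': "(u, c') \<in> A" "c' \<noteq> c"
    using tree_node_children[OF u] by (metis insertCI mem_Collect_eq)
  obtain l1 q1 where q1: "l1 \<in> leaves V A" "q1 \<in> dpaths A d1 l1"
    using d(2) arcs_subset by (blast elim: dpaths_to_leaf)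
  obtain l2 q2 where q2: "l2 \<in> leaves V A" "q2 \<in> dpaths A d2 l2"
    using d(3) arcs_subset by (blast elim: dpaths_to_leaf)
  obtain l3 q3 where q3: "l3 \<in> leaves V A" "q3 \<in> dpaths A c' l3"
    using c'(1) arcs_subset by (blast elim: dpaths_to_leaf)
  have "u # c # q1 \<in> {p1, p2}" "u # c # q2 \<in> {p1, p2}" "u # q3 \<in> {p1, p2}"
    using two q1 q2 q3 Cons_in_dpaths c c'(1) d(2,3) by meson+
  moreover have "q1 \<noteq> q2" "c # q1 \<noteq> q3" "c # q2 \<noteq> q3"
    using hd_dpaths[OF q1(2)] hd_dpaths[OF q2(2)] hd_dpaths[OF q3(2)] d(1) c'(2) by auto
  ultimately show False by auto
qed

lemma mu_vec_eq_delta_pairD: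
  assumes u: "u \<in> V" and mu: "mu_vec V A lab X n u = delta n {i, j}"
    and ij: "i \<in> {1..n}" "j \<in> {1..n}" "i \<noteq> j"
  shows "i \<in> X" "j \<in> X"
    and "h \<in> reticulations V A \<Longrightarrow> dpaths A u h = {}"
    and "l \<in> leaves V A \<Longrightarrow>
      npaths A u l = (if l \<in> {leaf_of V A lab i, leaf_of V A lab j} then 1 else 0)"
proof -
  have entry: "mu_vec V A lab X n u ! k = (if k \<in> {i, j} then 1 else 0)" if "k \<le> n" for k
    using mu nth_delta[OF that] by simp
  show iX: "i \<in> X" and jX: "j \<in> X"
    using entry[of i] entry[of j] nth_mu_vec[of i u] nth_mu_vec[of j u] ij
    by (auto split: if_splits)
  show "dpaths A u h = {}" if "h \<in> reticulations V A"
  proof -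
    have "(\<Sum>h \<in> reticulations V A. npaths A u h) = 0"
      using entry[of 0] nth_mu_vec[of 0 u] ij by auto
    then have "npaths A u h = 0"
      using that finite_V unfolding reticulations_def by simp
    then show ?thesis using npaths_pos[OF u, of _ h] by fastforce
  qed
  show "npaths A u l = (if l \<in> {leaf_of V A lab i, leaf_of V A lab j} then 1 else 0)"
    if l: "l \<in> leaves V A"
  proof -
    have "lab l \<in> {i, j} \<longleftrightarrow> l \<in> {leaf_of V A lab i, leaf_of V A lab j}"
      using leaf_of_lab[OF l] lab_leaf_of[OF iX] lab_leaf_of[OF jX] by fastforce
    moreover have "npaths A u l = mu_vec V A lab X n u ! lab l"
      using nth_mu_vec_label[OF lab_in_X[OF l]] leaf_of_lab[OF l] by simp
    ultimately show ?thesis using entry in_X_range[OF lab_in_X[OF l]] by simp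
  qed
qed

lemma cherry_parent_if_mu_vec_eq_delta:
  assumes u: "u \<in> VT V A" and mu: "mu_vec V A lab X n u = delta n {i, j}"
    and ij: "i \<in> {1..n}" "j \<in> {1..n}" "i \<noteq> j"
  shows "i \<in> X" "j \<in> X" "{w. (u, w) \<in> A} = {leaf_of V A lab i, leaf_of V A lab j}"
proof -
  have uV: "u \<in> V" using u unfolding VT_def leaves_def tree_nodes_def by blast
  note mu_D = mu_vec_eq_delta_pairD[OF uV mu ij]
  show iX: "i \<in> X" and jX: "j \<in> X" by (fact mu_D)+
  define Li Lj where "Li = leaf_of V A lab i" and "Lj = leaf_of V A lab j"
  have L: "Li \<in> leaves V A" "Lj \<in> leaves V A" "Li \<noteq> Lj"
    using iX jX ij(3) leaf_of_in_leaves lab_leaf_of unfolding Li_def Lj_def by metis+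
  have "card (dpaths A u Li) = 1" "card (dpaths A u Lj) = 1"
    using mu_D(4) L unfolding Li_def Lj_def npaths_def by simp_all
  then obtain pi pj where paths: "dpaths A u Li = {pi}" "dpaths A u Lj = {pj}"
    by (metis card_1_singletonE)
  have reached: "l \<in> {Li, Lj}" if "l \<in> leaves V A" "q \<in> dpaths A u l" for l q
    using mu_D(4)[OF that(1)] npaths_pos[OF uV that(2)] unfolding Li_def Lj_def
    by (auto split: if_splits)
  have two: "q \<in> {pi, pj}" if "l \<in> leaves V A" "q \<in> dpaths A u l" for l q
    using reached[OF that] that(2) paths by auto
  have "u \<notin> leaves V A"
  proof
    assume "u \<in> leaves V A"
    then have "dpaths A u v = (if v = u then {[u]} else {})" for v
      by (rule dpaths_from_leaf)
    then show False using paths L(3) by (auto split: if_splits)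
  qed
  then have ut: "u \<in> tree_nodes V A" using u unfolding VT_def by blast
  then obtain c1 c2 where c: "c1 \<noteq> c2" "{w. (u, w) \<in> A} = {c1, c2}"
    by (rule tree_node_children)
  have "c \<in> {Li, Lj}" if "(u, c) \<in> A" for c
    by (rule reached[OF child_is_leaf_if_two_leaf_paths[OF ut mu_D(3) two that]
          Cons_in_dpaths[OF that singleton_in_dpaths]])
  then have "c1 \<in> {Li, Lj}" "c2 \<in> {Li, Lj}" using c(2) by blast+
  then have "{c1, c2} = {Li, Lj}" using c(1) by auto
  then show "{w. (u, w) \<in> A} = {leaf_of V A lab i, leaf_of V A lab j}"
    using c(2) unfolding Li_def Lj_def by simp
qed

lemma dpaths_from_parent_of_leaves:
  assumes "{w. (p, w) \<in> A} \<subseteq> leaves V A" "v \<noteq> p"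
  shows "dpaths A p v = (if (p, v) \<in> A then {[p, v]} else {})"
proof -
  have "q = [p, v] \<and> (p, v) \<in> A" if q: "q \<in> dpaths A p v" for q
  proof -
    obtain w r where "q = p # r" "(p, w) \<in> A" "r \<in> dpaths A w v"
      using q assms(2)[symmetric] by (rule dpathsE_Cons)
    moreover have "dpaths A w v = (if v = w then {[w]} else {})" if "(p, w) \<in> A"
      using that assms(1) by (intro dpaths_from_leaf) blast
    ultimately show ?thesis by (simp split: if_splits)
  qed
  moreover have "(p, v) \<in> A \<Longrightarrow> [p, v] \<in> dpaths A p v"
    by (rule Cons_in_dpaths[OF _ singleton_in_dpaths])
  ultimately have "q \<in> dpaths A p v \<longleftrightarrow> q = [p, v] \<and> (p, v) \<in> A" for q
    by blast
  then show ?thesis by (cases "(p, v) \<in> A") auto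
qed

lemma net_cherryE:
  assumes "net_cherry V A lab X i j"
  obtains p where "i \<in> X" "j \<in> X" "i \<noteq> j" "p \<in> tree_nodes V A"
    "{w. (p, w) \<in> A} = {leaf_of V A lab i, leaf_of V A lab j}"
proof -
  obtain p where p: "(p, leaf_of V A lab i) \<in> A" "(p, leaf_of V A lab j) \<in> A"
    and ij: "i \<in> X" "j \<in> X" "i \<noteq> j"
    using assms unfolding net_cherry_def by blast
  have "leaf_of V A lab i \<noteq> leaf_of V A lab j" using ij lab_leaf_of by metis
  then show thesis using that ij tree_node_if_two_children[OF p] by blast
qed

lemma mu_vec_cherry_parent:
  assumes ij: "i \<in> X" "j \<in> X" and p_tree: "p \<in> tree_nodes V A"
    and children: "{w. (p, w) \<in> A} = {leaf_of V A lab i, leaf_of V A lab j}"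
  shows "mu_vec V A lab X n p = delta n {i, j}"
  unfolding mu_vec_eq_delta_iff
proof (intro allI impI)
  fix k assume k: "k \<le> n"
  have leaf_children: "{w. (p, w) \<in> A} \<subseteq> leaves V A"
    unfolding children using ij leaf_of_in_leaves by blast
  have paths: "npaths A p v = (if (p, v) \<in> A then 1 else 0)" if "v \<notin> tree_nodes V A" for v
  proof -
    have "v \<noteq> p" using that p_tree by blast
    then show ?thesis
      using dpaths_from_parent_of_leaves[OF leaf_children] unfolding npaths_def by simp
  qed
  have "npaths A p h = 0" if "h \<in> reticulations V A" for h
  proof -
    have "h \<notin> tree_nodes V A" "h \<notin> leaves V A"
      using that unfolding reticulations_def tree_nodes_def leaves_def by auto
    then show ?thesis using paths leaf_children by auto
  qed
  then have "(\<Sum>h \<in> reticulations V A. npaths A p h) = 0" by simp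
  moreover have "npaths A p (leaf_of V A lab k) = (if k \<in> {i, j} then 1 else 0)" if "k \<in> X"
  proof -
    have "leaf_of V A lab k \<notin> tree_nodes V A"
      using leaf_of_in_leaves[OF that] unfolding leaves_def tree_nodes_def by auto
    moreover have "(p, leaf_of V A lab k) \<in> A \<longleftrightarrow> leaf_of V A lab k \<in> {leaf_of V A lab i, leaf_of V A lab j}"
      unfolding children[symmetric] by simp
    moreover have "\<dots> \<longleftrightarrow> k \<in> {i, j}"
      using lab_leaf_of[OF that] lab_leaf_of[OF ij(1)] lab_leaf_of[OF ij(2)]
      by (metis empty_iff insert_iff)
    ultimately show ?thesis using paths by simp
  qed
  ultimately show "mu_vec V A lab X n p ! k = (if k \<in> {i, j} then 1 else 0)"
    using ij in_X_range[OF ij(1)] in_X_range[OF ij(2)] unfolding nth_mu_vec[OF k]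
    by (cases "k = 0"; cases "k \<in> X") auto
qed

lemma count_mu_rep_cherry:
  assumes "net_cherry V A lab X i j"
  shows "count (mu_rep V A lab X n) (delta n {i, j}) = 1"
proof -
  obtain p where ij: "i \<in> X" "j \<in> X" "i \<noteq> j" and p_tree: "p \<in> tree_nodes V A"
    and children: "{w. (p, w) \<in> A} = {leaf_of V A lab i, leaf_of V A lab j}"
    using assms by (rule net_cherryE)
  have "u = p" if "u \<in> VT V A" "mu_vec V A lab X n u = delta n {i, j}" for u
  proof -
    have "(u, leaf_of V A lab i) \<in> A"
      using cherry_parent_if_mu_vec_eq_delta[OF that in_X_range[OF ij(1)] in_X_range[OF ij(2)]] ij(3)
      by blast
    moreover have "(p, leaf_of V A lab i) \<in> A" using children by blast
    ultimately show "u = p" by (rule leaf_parent_unique[OF leaf_of_in_leaves[OF ij(1)]])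
  qed
  then have "delta n {i, j} \<notin># image_mset (mu_vec V A lab X n) (mset_set (VT V A - {p}))"
    using finite_VT by auto
  moreover have "mu_rep V A lab X n =
      add_mset (mu_vec V A lab X n p) (image_mset (mu_vec V A lab X n) (mset_set (VT V A - {p})))"
    using mset_set.remove[OF finite_VT, of p] p_tree unfolding mu_rep_def VT_def by simp
  ultimately show ?thesis
    using mu_vec_cherry_parent[OF ij(1,2) p_tree children] by (simp add: count_eq_zero_iff)
qed

lemma mu_rep_cherry_entries_eq:
  assumes "net_cherry V A lab X i j"
  shows "\<forall>m \<in># mu_rep V A lab X n. m \<noteq> delta n {i} \<and> m \<noteq> delta n {j} \<longrightarrow> m ! i = m ! j"
proof (intro ballI impI)
  fix m assume m: "m \<in># mu_rep V A lab X n" "m \<noteq> delta n {i} \<and> m \<noteq> delta n {j}"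
  obtain p where ij: "i \<in> X" "j \<in> X"
    and children: "{w. (p, w) \<in> A} = {leaf_of V A lab i, leaf_of V A lab j}"
    using assms by (rule net_cherryE)
  then have p: "(p, leaf_of V A lab i) \<in> A" "(p, leaf_of V A lab j) \<in> A" by blast+
  obtain u where u: "u \<in> VT V A" "mu_vec V A lab X n u = m"
    using m(1) unfolding in_mu_rep_iff by blast
  have not_leaf: "u \<noteq> leaf_of V A lab k" if "k \<in> X" "m \<noteq> delta n {k}" for k
    using that u(2) mu_vec_leaf[OF leaf_of_in_leaves[OF that(1)]] lab_leaf_of[OF that(1)] by auto
  have "m ! i = npaths A u (leaf_of V A lab i)"
    using nth_mu_vec_label[OF ij(1), of u] unfolding u(2) by simp
  also have "\<dots> = npaths A u p"
    using npaths_via_leaf_parent[OF leaf_of_in_leaves[OF ij(1)] p(1)] not_leaf[OF ij(1)] m(2) by simp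
  also have "\<dots> = npaths A u (leaf_of V A lab j)"
    using npaths_via_leaf_parent[OF leaf_of_in_leaves[OF ij(2)] p(2)] not_leaf[OF ij(2)] m(2) by simp
  also have "\<dots> = m ! j"
    using nth_mu_vec_label[OF ij(2), of u] unfolding u(2) by simp
  finally show "m ! i = m ! j" .
qed

end

theorem mainTheorem3:
  fixes V :: "'v set" and A :: "('v \<times> 'v) set" and lab :: "'v \<Rightarrow> nat"
    and X :: "nat set" and n i j :: nat
  assumes "phylo_net V A lab X n"
    and "i \<in> {1..n}" and "j \<in> {1..n}" and "i \<noteq> j"
  shows "net_cherry V A lab X i j \<longleftrightarrow> mset_cherry n (mu_rep V A lab X n) i j"
proof -
  interpret phylo_network V A lab X n
    using assms(1) by (rule phylo_network.intro)
  show ?thesis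
  proof
    assume cherry: "net_cherry V A lab X i j"
    show "mset_cherry n (mu_rep V A lab X n) i j"
      unfolding mset_cherry_def
      by (intro conjI assms(4) count_mu_rep_cherry[OF cherry] mu_rep_cherry_entries_eq[OF cherry])
  next
    assume "mset_cherry n (mu_rep V A lab X n) i j"
    then have "count (mu_rep V A lab X n) (delta n {i, j}) = 1"
      unfolding mset_cherry_def by blast
    then have "delta n {i, j} \<in># mu_rep V A lab X n"
      by (metis count_greater_zero_iff zero_less_one)
    then obtain u where "u \<in> VT V A" "mu_vec V A lab X n u = delta n {i, j}"
      unfolding in_mu_rep_iff by blast
    from cherry_parent_if_mu_vec_eq_delta[OF this assms(2-4)]
    show "net_cherry V A lab X i j"
      unfolding net_cherry_def using assms(4) by blast
  qed
qed

end
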